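(* Fix a constant $c\ge 10$. Consider the random pairwise load balancing process on $n\ge2$ nodes with arbitrary initial load vector, and let $T_2$ be the first time $t\ge T_1$ with $\max_i\ell_i(t)\le\varnothing+2c$ and $\min_i\ell_i(t)\ge\varnothing-2c$. Let $T_3$ be the first time $t\ge T_2$ such that $\max_{1\le i\le n}\ell_i(t)\le \mathrm{round}(\varnothing)+1$ and $\min_{1\le i\le n}\ell_i(t)\ge\mathrm{round}(\varnothing)-1$. Then with high probability (probability $1-O(1/n)$), $T_3=T_2+O(n\log n)$, where the constant in $O(\cdot)$ depends only on $c$.
   Context: Random pairwise load balancing process: $n$ nodes, $m$ tokens, load vector $\ell(t)\in\mathbb{Z}^n$. In each time step $t$, independently, an ordered pair $(u,v)$ of distinct nodes is chosen uniformly at random and loads become $\ell_u(t+1)=\lceil(\ell_u(t)+\ell_v(t))/2\rceil$, $\ell_v(t+1)=\lfloor(\ell_u(t)+\ell_v(t))/2\rfloor$. Average load $\varnothing=m/n$; $\mathrm{round}(\varnothing)$ is $\varnothing$ rounded to the nearest integer; potential $\Phi(\ell)=\sum_i(\ell_i-\varnothing)^2$; $T_1$ is the first time $t$ with $\Phi(\ell(t))<n$. *)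

theory Defs
  imports "HOL-Probability.Probability"
begin

text \<open>Nodes are 0..n-1; a load vector is a function nat => int (only indices < n matter).\<close>

definition node_pairs :: "nat \<Rightarrow> (nat \<times> nat) set" where
  "node_pairs n = {(u, v). u < n \<and> v < n \<and> u \<noteq> v}"

text \<open>Probability space: an infinite i.i.d. sequence of uniformly random ordered pairs
of distinct nodes; the t-th element is the pair chosen in step t.\<close>
definition pair_space :: "nat \<Rightarrow> (nat \<times> nat) stream measure" where
  "pair_space n = stream_space (measure_pmf (pmf_of_set (node_pairs n)))"

definition lb_step :: "(nat \<Rightarrow> int) \<Rightarrow> nat \<times> nat \<Rightarrow> (nat \<Rightarrow> int)" where
  "lb_step l p = (case p of (u, v) \<Rightarrow>
     l(u := \<lceil>real_of_int (l u + l v) / 2\<rceil>, v := \<lfloor>real_of_int (l u + l v) / 2\<rfloor>))"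

primrec load :: "(nat \<Rightarrow> int) \<Rightarrow> (nat \<times> nat) stream \<Rightarrow> nat \<Rightarrow> (nat \<Rightarrow> int)" where
  "load l0 \<omega> 0 = l0"
| "load l0 \<omega> (Suc t) = lb_step (load l0 \<omega> t) (\<omega> !! t)"

definition avg :: "nat \<Rightarrow> (nat \<Rightarrow> int) \<Rightarrow> real" where
  "avg n l = real_of_int (\<Sum>i<n. l i) / real n"

definition Phi :: "nat \<Rightarrow> real \<Rightarrow> (nat \<Rightarrow> int) \<Rightarrow> real" where
  "Phi n a l = (\<Sum>i<n. (real_of_int (l i) - a)^2)"

definition maxload :: "nat \<Rightarrow> (nat \<Rightarrow> int) \<Rightarrow> int" where
  "maxload n l = Max (l ` {..<n})"

definition minload :: "nat \<Rightarrow> (nat \<Rightarrow> int) \<Rightarrow> int" where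
  "minload n l = Min (l ` {..<n})"

definition hit_from :: "enat \<Rightarrow> (nat \<Rightarrow> bool) \<Rightarrow> enat" where
  "hit_from s P = (case s of
      enat s0 \<Rightarrow> (if \<exists>t\<ge>s0. P t then enat (LEAST t. s0 \<le> t \<and> P t) else \<infinity>)
    | \<infinity> \<Rightarrow> \<infinity>)"

definition T1 :: "nat \<Rightarrow> (nat \<Rightarrow> int) \<Rightarrow> (nat \<times> nat) stream \<Rightarrow> enat" where
  "T1 n l0 \<omega> = hit_from 0 (\<lambda>t. Phi n (avg n l0) (load l0 \<omega> t) < real n)"

definition T2 :: "real \<Rightarrow> nat \<Rightarrow> (nat \<Rightarrow> int) \<Rightarrow> (nat \<times> nat) stream \<Rightarrow> enat" where
  "T2 c n l0 \<omega> = hit_from (T1 n l0 \<omega>)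
     (\<lambda>t. real_of_int (maxload n (load l0 \<omega> t)) \<le> avg n l0 + 2 * c \<and>
          real_of_int (minload n (load l0 \<omega> t)) \<ge> avg n l0 - 2 * c)"

text \<open>round(x) = floor(x + 1/2), i.e. ties rounded up.\<close>
definition T3 :: "real \<Rightarrow> nat \<Rightarrow> (nat \<Rightarrow> int) \<Rightarrow> (nat \<times> nat) stream \<Rightarrow> enat" where
  "T3 c n l0 \<omega> = hit_from (T2 c n l0 \<omega>)
     (\<lambda>t. maxload n (load l0 \<omega> t) \<le> round (avg n l0) + 1 \<and>
          minload n (load l0 \<omega> t) \<ge> round (avg n l0) - 1)"

end

theory Submission
  imports Defs
begin

text \<open>
  Balancing a pair preserves the total load, never increases \<open>\<Sum>i \<ell>\<^sub>i\<^sup>2\<close> (hence \<open>\<Phi>\<close>) and keeps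
  every load inside any interval containing the old loads. Let \<open>r = round \<oslash>\<close> and measure the
  distance to the target by the total excess \<open>E = \<Sum>i dist(\<ell>\<^sub>i, [r - 1, r + 1])\<close>. While all loads
  lie within \<open>\<oslash> \<plusminus> 2c\<close>, a fraction \<open>\<ge> 1/(4c + 3)\<close> of the nodes is loaded at most \<open>r\<close> and
  such a fraction at least \<open>r\<close>; balancing a node with excess with any of them lowers \<open>E\<close>, and
  the excess of a single node is at most \<open>2c\<close>. Hence \<open>E\<close> shrinks in expectation by a factor
  \<open>1 - 1/(\<kappa> n)\<close> per step, \<open>\<kappa> = 2c(4c + 3)\<close>, and after \<open>2\<kappa> n ln n\<close> steps it vanishes except
  with probability \<open>\<le> 2cn \<cdot> e/n\<^sup>2\<close>. The strong Markov property at the first entrance into the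
  window \<open>\<oslash> \<plusminus> 2c\<close> transfers this bound to the time \<open>T\<^sub>2\<close>.

  That \<open>T\<^sub>2\<close> is almost surely finite follows from \<open>\<Sum>i \<ell>\<^sub>i\<^sup>2\<close>: unless the configuration is
  settled (\<open>\<Phi> < n\<close> and all loads within \<open>\<oslash> \<plusminus> 2c\<close>), two loads differ by at least \<open>2\<close>, and
  balancing them, which happens with probability \<open>1/(n(n - 1))\<close>, lowers \<open>\<Sum>i \<ell>\<^sub>i\<^sup>2\<close> by \<open>1\<close>.
\<close>

lemma finite_node_pairs: "finite (node_pairs n)"
  by (rule finite_subset[of _ "{..<n} \<times> {..<n}"]) (auto simp: node_pairs_def)

lemma node_pairs_nonempty: "n \<ge> 2 \<Longrightarrow> node_pairs n \<noteq> {}"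
proof -
  assume "n \<ge> 2"
  then have "(0, 1) \<in> node_pairs n" by (simp add: node_pairs_def)
  then show ?thesis by blast
qed

lemma card_node_pairs_le: "card (node_pairs n) \<le> n * n"
  using card_mono[of "{..<n} \<times> {..<n}" "node_pairs n"] by (auto simp: node_pairs_def card_cartesian_product)

lemma lb_step_eq: "lb_step l (u, v) = l(u := (l u + l v + 1) div 2, v := (l u + l v) div 2)"
proof -
  have "\<lceil>real_of_int s / 2\<rceil> = (s + 1) div 2" "\<lfloor>real_of_int s / 2\<rfloor> = s div 2" for s :: int
    by linarith+
  then show ?thesis unfolding lb_step_def by (simp only: prod.case)
qed

lemma halves_balanced:
  fixes x y :: int
  shows "(x + y + 1) div 2 + (x + y) div 2 = x + y"
    and "(x + y) div 2 \<le> (x + y + 1) div 2" "(x + y + 1) div 2 \<le> (x + y) div 2 + 1"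
  by presburger+

lemma sum_fun_upd2:
  fixes f :: "'a \<Rightarrow> 'b::ab_group_add" and n :: nat
  assumes "u < n" "v < n" "u \<noteq> v"
  shows "(\<Sum>i<n. f ((l(u := x, v := y)) i)) = (\<Sum>i<n. f (l i)) - f (l u) - f (l v) + f x + f y"
proof -
  have split: "(\<Sum>i<n. g i) = g u + g v + (\<Sum>i\<in>{..<n} - {u} - {v}. g i)" for g :: "nat \<Rightarrow> 'b"
    using assms by (simp add: sum.remove[of _ u] sum.remove[of _ v] add.assoc)
  have "(\<Sum>i\<in>{..<n} - {u} - {v}. f ((l(u := x, v := y)) i)) = (\<Sum>i\<in>{..<n} - {u} - {v}. f (l i))"
    by (rule sum.cong) auto
  then show ?thesis
    using assms by (subst (1 2) split) (simp add: algebra_simps)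
qed

lemma sum_lb_step:
  fixes f :: "int \<Rightarrow> 'b::ab_group_add"
  assumes "(u, v) \<in> node_pairs n"
  shows "(\<Sum>i<n. f (lb_step l (u, v) i)) = (\<Sum>i<n. f (l i)) - f (l u) - f (l v)
           + f ((l u + l v + 1) div 2) + f ((l u + l v) div 2)"
  using assms unfolding lb_step_eq node_pairs_def by (intro sum_fun_upd2) auto

lemma sum_loads_lb_step:
  assumes "p \<in> node_pairs n"
  shows "(\<Sum>i<n. lb_step l p i) = (\<Sum>i<n. l i)"
proof -
  obtain u v where "p = (u, v)" by (cases p)
  then show ?thesis
    using sum_lb_step[of u v n "\<lambda>z. z" l] halves_balanced(1)[of "l u" "l v"] assms by simp
qed

definition excess :: "int \<Rightarrow> int \<Rightarrow> int" where
  "excess r z = max 0 (z - (r + 1)) + max 0 (r - 1 - z)"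

lemma excess_nonneg: "0 \<le> excess r z"
  by (simp add: excess_def)

lemma excess_eq_0_iff: "excess r z = 0 \<longleftrightarrow> r - 1 \<le> z \<and> z \<le> r + 1"
  by (auto simp: excess_def)

lemma excess_balanced_split:
  fixes a b x y r :: int
  assumes "a + b = x + y" "b \<le> a" "a \<le> b + 1"
  shows "excess r a + excess r b \<le> excess r x + excess r y"
    and "x \<ge> r + 2 \<Longrightarrow> y \<le> r \<Longrightarrow> excess r a + excess r b \<le> excess r x + excess r y - 1"
    and "x \<le> r - 2 \<Longrightarrow> y \<ge> r \<Longrightarrow> excess r a + excess r b \<le> excess r x + excess r y - 1"
  using assms unfolding excess_def by (simp_all add: max_def; linarith)+

lemma excess_le:
  assumes "a - d \<le> real_of_int z" "real_of_int z \<le> a + d" "\<bar>real_of_int r - a\<bar> \<le> 1/2"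
  shows "real_of_int (excess r z) \<le> d"
  using assms unfolding excess_def by (simp add: max_def abs_le_iff; linarith)

text \<open>With \<open>m = a - b \<in> {0, 1}\<close> and \<open>k = x - b\<close> one has \<open>x - y = 2k - m\<close> and
  \<open>x\<^sup>2 + y\<^sup>2 - a\<^sup>2 - b\<^sup>2 = 2k(k - m)\<close>.\<close>

lemma squares_balanced_split:
  fixes a b x y :: int
  assumes "a + b = x + y" "b \<le> a" "a \<le> b + 1"
  shows "a^2 + b^2 \<le> x^2 + y^2"
    and "\<bar>x - y\<bar> \<ge> 2 \<Longrightarrow> a^2 + b^2 \<le> x^2 + y^2 - 1"
proof -
  define m k where "m = a - b" and "k = x - b"
  have m: "m = 0 \<or> m = 1" and xy: "x - y = 2 * k - m"
    using assms unfolding m_def k_def by auto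
  have y: "y = a + b - x"
    using assms(1) by simp
  have diff: "x^2 + y^2 - a^2 - b^2 = 2 * (k * (k - m))"
    unfolding m_def k_def y by (simp add: power2_eq_square algebra_simps)
  have "0 \<le> k * (k - m)"
    using m by (cases "k \<le> 0") (auto intro: mult_nonpos_nonpos)
  then show "a^2 + b^2 \<le> x^2 + y^2"
    using diff by linarith
  show "a^2 + b^2 \<le> x^2 + y^2 - 1" if "\<bar>x - y\<bar> \<ge> 2"
  proof -
    have "1 \<le> k * (k - m)"
    proof (cases "k \<le> 0")
      case True
      then have "1 * 1 \<le> (- k) * (m - k)"
        using m that xy by (intro mult_mono) auto
      then show ?thesis by (simp add: algebra_simps)
    next
      case False
      then have "1 * 1 \<le> k * (k - m)"
        using m that xy by (intro mult_mono) auto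
      then show ?thesis by simp
    qed
    then show ?thesis
      using diff by linarith
  qed
qed

definition loads_within :: "nat \<Rightarrow> real \<Rightarrow> real \<Rightarrow> (nat \<Rightarrow> int) \<Rightarrow> bool" where
  "loads_within n lo hi l \<longleftrightarrow> (\<forall>i<n. lo \<le> real_of_int (l i) \<and> real_of_int (l i) \<le> hi)"

lemma loads_within_of_int:
  "loads_within n (of_int lo) (of_int hi) l \<longleftrightarrow> (\<forall>i<n. lo \<le> l i \<and> l i \<le> hi)"
  unfolding loads_within_def by (simp only: of_int_le_iff)

lemma loads_within_lb_step:
  assumes "p \<in> node_pairs n" "loads_within n lo hi l"
  shows "loads_within n lo hi (lb_step l p)"
proof -
  obtain u v where p: "p = (u, v)" and uv: "u < n" "v < n"
    using assms(1) by (cases p) (auto simp: node_pairs_def)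
  have "min (l u) (l v) \<le> z \<Longrightarrow> z \<le> max (l u) (l v) \<Longrightarrow> lo \<le> real_of_int z \<and> real_of_int z \<le> hi"
    for z using assms(2) uv unfolding loads_within_def by (smt (verit) of_int_le_iff)
  moreover have "min x y \<le> (x + y + 1) div 2" "(x + y + 1) div 2 \<le> max x y"
    "min x y \<le> (x + y) div 2" "(x + y) div 2 \<le> max x y" for x y :: int
    by presburger+
  ultimately show ?thesis
    using assms(2) unfolding p lb_step_eq loads_within_def by auto
qed

definition sum_squares :: "nat \<Rightarrow> (nat \<Rightarrow> int) \<Rightarrow> int" where
  "sum_squares n l = (\<Sum>i<n. (l i)^2)"

lemma sum_squares_nonneg: "0 \<le> sum_squares n l"
  unfolding sum_squares_def by (intro sum_nonneg) simp

lemma sum_squares_lb_step: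
  assumes "(u, v) \<in> node_pairs n"
  shows "sum_squares n (lb_step l (u, v)) \<le> sum_squares n l"
    and "\<bar>l u - l v\<bar> \<ge> 2 \<Longrightarrow> sum_squares n (lb_step l (u, v)) \<le> sum_squares n l - 1"
  using squares_balanced_split[of "(l u + l v + 1) div 2" "(l u + l v) div 2" "l u" "l v",
      OF halves_balanced]
    sum_lb_step[OF assms, of "\<lambda>z. z^2" l]
  unfolding sum_squares_def by linarith+

lemma Phi_eq_sum_squares:
  "Phi n a l = real_of_int (sum_squares n l) - 2 * a * real_of_int (\<Sum>i<n. l i) + real n * a^2"
  unfolding Phi_def sum_squares_def
  by (simp add: power2_eq_square algebra_simps sum.distrib sum_subtractf sum_distrib_left)

lemma Phi_lb_step_le:
  assumes "p \<in> node_pairs n"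
  shows "Phi n a (lb_step l p) \<le> Phi n a l"
  using assms sum_squares_lb_step(1) sum_loads_lb_step
  by (cases p) (simp add: Phi_eq_sum_squares)

definition total_excess :: "nat \<Rightarrow> int \<Rightarrow> (nat \<Rightarrow> int) \<Rightarrow> int" where
  "total_excess n r l = (\<Sum>i<n. excess r (l i))"

lemma total_excess_nonneg: "0 \<le> total_excess n r l"
  unfolding total_excess_def by (intro sum_nonneg excess_nonneg)

lemma total_excess_eq_0_iff:
  "total_excess n r l = 0 \<longleftrightarrow> loads_within n (of_int (r - 1)) (of_int (r + 1)) l"
  unfolding total_excess_def loads_within_of_int
  by (subst sum_nonneg_eq_0_iff) (auto simp: excess_nonneg excess_eq_0_iff)

lemma total_excess_lb_step:
  assumes "(u, v) \<in> node_pairs n"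
  shows "total_excess n r (lb_step l (u, v)) \<le> total_excess n r l"
    and "(l u \<ge> r + 2 \<and> l v \<le> r) \<or> (l u \<le> r - 2 \<and> l v \<ge> r) \<Longrightarrow>
      total_excess n r (lb_step l (u, v)) \<le> total_excess n r l - 1"
  using excess_balanced_split[of "(l u + l v + 1) div 2" "(l u + l v) div 2" "l u" "l v" r,
      OF halves_balanced]
    sum_lb_step[OF assms, of "excess r" l]
  unfolding total_excess_def by linarith+

lemma total_excess_le_card:
  assumes "loads_within n (a - d) (a + d) l" "\<bar>real_of_int r - a\<bar> \<le> 1/2"
  shows "real_of_int (total_excess n r l) \<le> d * real (card {i. i < n \<and> (l i \<ge> r + 2 \<or> l i \<le> r - 2)})"
proof -
  define F where "F = {i. i < n \<and> (l i \<ge> r + 2 \<or> l i \<le> r - 2)}"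
  have "total_excess n r l = (\<Sum>i\<in>F. excess r (l i))"
    unfolding total_excess_def F_def
    by (rule sum.mono_neutral_right) (auto simp: excess_eq_0_iff)
  also have "real_of_int \<dots> \<le> (\<Sum>i\<in>F. d)"
    unfolding of_int_sum
    by (rule sum_mono, rule excess_le) (use assms in \<open>auto simp: F_def loads_within_def\<close>)
  finally show ?thesis
    unfolding F_def by (simp add: mult.commute)
qed

lemma total_excess_le:
  assumes "loads_within n (a - d) (a + d) l" "\<bar>real_of_int r - a\<bar> \<le> 1/2" "0 \<le> d"
  shows "real_of_int (total_excess n r l) \<le> d * real n"
proof -
  have "card {i. i < n \<and> (l i \<ge> r + 2 \<or> l i \<le> r - 2)} \<le> card {..<n}"
    by (rule card_mono) auto
  then show ?thesis
    using total_excess_le_card[OF assms(1,2)] assms(3) by (smt (verit) card_lessThan mult_left_mono of_nat_mono)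
qed

lemma card_loads_le_round:
  fixes l :: "nat \<Rightarrow> int"
  assumes sum: "real_of_int (\<Sum>i<n. l i) = a * real n"
    and low: "\<forall>i<n. a - d \<le> real_of_int (l i)" and r: "\<bar>real_of_int r - a\<bar> \<le> 1/2"
  shows "real n \<le> (2 * d + 3) * real (card {i. i < n \<and> l i \<le> r})"
proof -
  have r': "a - 1/2 \<le> real_of_int r" "real_of_int r \<le> a + 1/2"
    using r unfolding abs_le_iff by linarith+
  define L where "L = {i. i < n \<and> l i \<le> r}"
  have L: "L \<subseteq> {..<n}" "finite L" unfolding L_def by auto
  have cardL: "card L \<le> n" "card ({..<n} - L) = n - card L"
    using card_mono[OF finite_lessThan L(1)] L by (auto simp: card_Diff_subset)
  have "real (card L) * (a - d) \<le> (\<Sum>i\<in>L. real_of_int (l i))"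
    using sum_mono[of L "\<lambda>_. a - d" "\<lambda>i. real_of_int (l i)"] low L(1) by auto
  moreover have "real_of_int (r + 1) \<le> real_of_int (l i)" if "i \<in> {..<n} - L" for i
    using that unfolding L_def of_int_le_iff by auto
  then have "real (n - card L) * (real_of_int r + 1) \<le> (\<Sum>i\<in>{..<n} - L. real_of_int (l i))"
    using sum_mono[of "{..<n} - L" "\<lambda>_. real_of_int r + 1" "\<lambda>i. real_of_int (l i)"] cardL
    by auto
  moreover have "(\<Sum>i\<in>L. real_of_int (l i)) + (\<Sum>i\<in>{..<n} - L. real_of_int (l i)) = a * real n"
    using sum.subset_diff[OF L(1) finite_lessThan, of "\<lambda>i. real_of_int (l i)"] sum by simp
  ultimately have "real n * (real_of_int r + 1 - a) \<le> real (card L) * (real_of_int r + 1 - a + d)"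
    using cardL by (simp add: of_nat_diff algebra_simps)
  moreover have "real n * (1/2) \<le> real n * (real_of_int r + 1 - a)"
    using r' by (intro mult_left_mono) auto
  moreover have "real (card L) * (real_of_int r + 1 - a + d) \<le> real (card L) * (d + 3/2)"
    using r' by (intro mult_left_mono) auto
  ultimately show ?thesis
    unfolding L_def by (simp add: algebra_simps)
qed

lemma card_loads_ge_round:
  fixes l :: "nat \<Rightarrow> int"
  assumes sum: "real_of_int (\<Sum>i<n. l i) = a * real n"
    and high: "\<forall>i<n. real_of_int (l i) \<le> a + d" and r: "\<bar>real_of_int r - a\<bar> \<le> 1/2"
  shows "real n \<le> (2 * d + 3) * real (card {i. i < n \<and> l i \<ge> r})"
proof -
  have "real_of_int (\<Sum>i<n. - l i) = - a * real n" "\<forall>i<n. - a - d \<le> real_of_int (- l i)"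
    "\<bar>real_of_int (- r) - - a\<bar> \<le> 1/2"
    using assms by (auto simp: sum_negf abs_minus_commute)
  from card_loads_le_round[OF this] show ?thesis
    by simp
qed

lemma card_excess_pairs_le_sum_drop:
  fixes l :: "nat \<Rightarrow> int"
  shows "real (card {i. i < n \<and> l i \<ge> r + 2} * card {i. i < n \<and> l i \<le> r}
      + card {i. i < n \<and> l i \<le> r - 2} * card {i. i < n \<and> l i \<ge> r})
    \<le> (\<Sum>p\<in>node_pairs n. real_of_int (total_excess n r l - total_excess n r (lb_step l p)))"
proof -
  define H Lo L U where "H = {i. i < n \<and> l i \<ge> r + 2}" and "Lo = {i. i < n \<and> l i \<le> r - 2}"
    and "L = {i. i < n \<and> l i \<le> r}" and "U = {i. i < n \<and> l i \<ge> r}"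
  define drop where "drop p = real_of_int (total_excess n r l - total_excess n r (lb_step l p))" for p
  define D where "D = H \<times> L \<union> Lo \<times> U"
  have D_pairs: "D \<subseteq> node_pairs n"
    unfolding D_def H_def Lo_def L_def U_def node_pairs_def by auto
  have "card D = card H * card L + card Lo * card U"
    unfolding D_def H_def Lo_def L_def U_def
    by (subst card_Un_disjoint) (auto simp: card_cartesian_product)
  then have "real (card H * card L + card Lo * card U) = (\<Sum>p\<in>D. 1)"
    by simp
  also have "\<dots> \<le> (\<Sum>p\<in>D. drop p)"
  proof (rule sum_mono)
    fix p assume "p \<in> D"
    then obtain u v where "p = (u, v)" "(u, v) \<in> node_pairs n"
      "(l u \<ge> r + 2 \<and> l v \<le> r) \<or> (l u \<le> r - 2 \<and> l v \<ge> r)"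
      using D_pairs unfolding D_def H_def Lo_def L_def U_def by auto
    then show "1 \<le> drop p"
      using total_excess_lb_step(2) unfolding drop_def by fastforce
  qed
  also have "\<dots> \<le> (\<Sum>p\<in>node_pairs n. drop p)"
    using D_pairs finite_node_pairs total_excess_lb_step(1) unfolding drop_def
    by (intro sum_mono2) (auto simp: node_pairs_def)
  finally show ?thesis
    unfolding H_def Lo_def L_def U_def drop_def .
qed

text \<open>Each node loaded at least \<open>r + 2\<close> (at most \<open>r - 2\<close>) lowers the total excess when paired
  with any of the \<open>\<ge> n / (2d + 3)\<close> nodes loaded at most \<open>r\<close> (at least \<open>r\<close>), while the total
  excess is at most \<open>d\<close> times the number of such nodes.\<close>

lemma total_excess_decrease:
  fixes l :: "nat \<Rightarrow> int"
  assumes sum: "real_of_int (\<Sum>i<n. l i) = a * real n"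
    and W: "loads_within n (a - d) (a + d) l" and r: "\<bar>real_of_int r - a\<bar> \<le> 1/2" and "0 \<le> d"
  shows "real_of_int (total_excess n r l) * real n \<le>
    d * (2 * d + 3) * (\<Sum>p\<in>node_pairs n. real_of_int (total_excess n r l - total_excess n r (lb_step l p)))"
proof -
  define H Lo L U where "H = {i. i < n \<and> l i \<ge> r + 2}" and "Lo = {i. i < n \<and> l i \<le> r - 2}"
    and "L = {i. i < n \<and> l i \<le> r}" and "U = {i. i < n \<and> l i \<ge> r}"
  have "real n \<le> (2 * d + 3) * real (card L)" "real n \<le> (2 * d + 3) * real (card U)"
    using card_loads_le_round[OF sum _ r] card_loads_ge_round[OF sum _ r] W
    unfolding L_def U_def loads_within_def by auto
  then have "real (card H) * real n \<le> real (card H) * ((2 * d + 3) * real (card L))"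
    "real (card Lo) * real n \<le> real (card Lo) * ((2 * d + 3) * real (card U))"
    by (simp_all add: mult_left_mono)
  then have "(real (card H) + real (card Lo)) * real n \<le> (2 * d + 3) * real (card H * card L + card Lo * card U)"
    by (simp add: algebra_simps)
  moreover have "real_of_int (total_excess n r l) \<le> d * (real (card H) + real (card Lo))"
  proof -
    have "{i. i < n \<and> (l i \<ge> r + 2 \<or> l i \<le> r - 2)} = H \<union> Lo" "H \<inter> Lo = {}"
      unfolding H_def Lo_def by auto
    then show ?thesis
      using total_excess_le_card[OF W r] by (simp add: card_Un_disjoint H_def Lo_def)
  qed
  ultimately have "real_of_int (total_excess n r l) * real n
      \<le> d * ((2 * d + 3) * real (card H * card L + card Lo * card U))"
    using \<open>0 \<le> d\<close> by (smt (verit) mult_left_mono mult_right_mono of_nat_0_le_iff mult.assoc)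
  also have "\<dots> \<le> d * (2 * d + 3) * (\<Sum>p\<in>node_pairs n. real_of_int (total_excess n r l - total_excess n r (lb_step l p)))"
    using card_excess_pairs_le_sum_drop[where n = n and l = l and r = r] \<open>0 \<le> d\<close> unfolding H_def Lo_def L_def U_def
    by (simp add: mult.assoc mult_left_mono)
  finally show ?thesis .
qed

definition settled :: "real \<Rightarrow> nat \<Rightarrow> real \<Rightarrow> (nat \<Rightarrow> int) \<Rightarrow> bool" where
  "settled d n a l \<longleftrightarrow> Phi n a l < real n \<and> loads_within n (a - d) (a + d) l"

lemma near_average_if_two_adjacent_values:
  fixes l :: "nat \<Rightarrow> int"
  assumes "n \<ge> 1" and sum: "real_of_int (\<Sum>i<n. l i) = a * real n"
    and two: "\<And>i. i < n \<Longrightarrow> l i = m \<or> l i = m + 1"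
  shows "Phi n a l < real n" and "loads_within n (a - 1) (a + 1) l"
proof -
  define x where "x i = real_of_int (l i - m)" for i
  define t where "t = a - real_of_int m"
  have x01: "x i = 0 \<or> x i = 1" if "i < n" for i
    using two[OF that] unfolding x_def by auto
  have sum_x: "(\<Sum>i<n. x i) = real n * t"
    unfolding x_def t_def using sum by (simp add: sum_subtractf algebra_simps)
  have "0 \<le> (\<Sum>i<n. x i)" "(\<Sum>i<n. x i) \<le> (\<Sum>i<n. 1)"
    by (intro sum_nonneg sum_mono; use x01 in force)+
  then have t: "0 \<le> t" "t \<le> 1"
    using \<open>n \<ge> 1\<close> unfolding sum_x by (simp_all add: zero_le_mult_iff)
  have "Phi n a l = (\<Sum>i<n. x i - 2 * t * x i + t^2)"
    unfolding Phi_def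
  proof (rule sum.cong)
    fix i assume "i \<in> {..<n}"
    then have "(x i)^2 = x i"
      using x01 by (auto simp: power2_eq_square)
    then show "(real_of_int (l i) - a)^2 = x i - 2 * t * x i + t^2"
      unfolding x_def t_def by (simp add: power2_eq_square algebra_simps)
  qed simp
  also have "\<dots> = (\<Sum>i<n. x i) - 2 * t * (\<Sum>i<n. x i) + real n * t^2"
    by (simp add: sum.distrib sum_subtractf sum_distrib_left)
  also have "\<dots> = real n * (t * (1 - t))"
    unfolding sum_x by (simp add: power2_eq_square algebra_simps)
  also have "\<dots> < real n"
  proof -
    have "t * (1 - t) \<le> 1/4"
      using zero_le_power2[of "t - 1/2"] by (simp add: power2_eq_square algebra_simps)
    then show ?thesis
      using \<open>n \<ge> 1\<close> by simp
  qed
  finally show "Phi n a l < real n" .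
  show "loads_within n (a - 1) (a + 1) l"
    using x01 t unfolding loads_within_def x_def t_def by force
qed

lemma settled_if_loads_differ_le_1:
  fixes l :: "nat \<Rightarrow> int"
  assumes "n \<ge> 1" "d \<ge> 1" and sum: "real_of_int (\<Sum>i<n. l i) = a * real n"
    and close: "\<And>u v. u < n \<Longrightarrow> v < n \<Longrightarrow> \<bar>l u - l v\<bar> \<le> 1"
  shows "settled d n a l"
proof -
  define m where "m = Min (l ` {..<n})"
  have "m \<in> l ` {..<n}"
    unfolding m_def using \<open>n \<ge> 1\<close> by (intro Min_in) (auto simp: lessThan_empty_iff)
  then obtain i0 where i0: "i0 < n" "l i0 = m"
    by auto
  have "l i = m \<or> l i = m + 1" if "i < n" for i
  proof -
    have "m \<le> l i"
      unfolding m_def using that by (intro Min_le) auto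
    then show ?thesis
      using close[OF that i0(1)] i0(2) by auto
  qed
  note two = near_average_if_two_adjacent_values[OF \<open>n \<ge> 1\<close> sum this]
  have "loads_within n (a - d) (a + d) l"
    using two(2) \<open>d \<ge> 1\<close> unfolding loads_within_def by force
  with two(1) show ?thesis
    unfolding settled_def ..
qed

lemma unbalanced_pair_if_not_settled:
  fixes l :: "nat \<Rightarrow> int"
  assumes "n \<ge> 1" "d \<ge> 1" "real_of_int (\<Sum>i<n. l i) = a * real n" "\<not> settled d n a l"
  shows "\<exists>(u, v)\<in>node_pairs n. \<bar>l u - l v\<bar> \<ge> 2"
  using settled_if_loads_differ_le_1[OF assms(1-3)] assms(4)
  by (force simp: node_pairs_def)

definition pair_mean :: "nat \<Rightarrow> (nat \<times> nat \<Rightarrow> real) \<Rightarrow> real" where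
  "pair_mean n f = (\<Sum>p\<in>node_pairs n. f p) / real (card (node_pairs n))"

lemma pair_mean_mono:
  "(\<And>p. p \<in> node_pairs n \<Longrightarrow> f p \<le> g p) \<Longrightarrow> pair_mean n f \<le> pair_mean n g"
  unfolding pair_mean_def by (intro divide_right_mono sum_mono) auto

lemma pair_mean_const: "n \<ge> 2 \<Longrightarrow> pair_mean n (\<lambda>_. c) = c"
  using finite_node_pairs node_pairs_nonempty by (simp add: pair_mean_def)

lemma pair_mean_le: "n \<ge> 2 \<Longrightarrow> (\<And>p. p \<in> node_pairs n \<Longrightarrow> f p \<le> c) \<Longrightarrow> pair_mean n f \<le> c"
  using pair_mean_mono[of n f "\<lambda>_. c"] pair_mean_const by metis

lemma pair_mean_cmult: "pair_mean n (\<lambda>p. c * f p) = c * pair_mean n f"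
  unfolding pair_mean_def by (simp add: sum_distrib_left)

lemma prob_space_pair_space: "prob_space (pair_space n)"
  unfolding pair_space_def by (rule prob_space.prob_space_stream_space) (rule prob_space_measure_pmf)

lemma measurable_shd_pair_space: "shd \<in> pair_space n \<rightarrow>\<^sub>M count_space UNIV"
  unfolding pair_space_def
  using measurable_shd[of "measure_pmf (pmf_of_set (node_pairs n))"]
  by (simp add: measurable_cong_sets[OF refl sets_measure_pmf_count_space])

lemma measurable_stl_pair_space: "stl \<in> pair_space n \<rightarrow>\<^sub>M pair_space n"
  unfolding pair_space_def by (rule measurable_stl)

lemma load_Suc_stl: "load l \<omega> (Suc t) = load (lb_step l (shd \<omega>)) (stl \<omega>) t"
  by (induction t arbitrary: l \<omega>) (auto simp: snth.simps)

lemma measurable_load: "(\<lambda>\<omega>. load l \<omega> t) \<in> pair_space n \<rightarrow>\<^sub>M count_space UNIV"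
proof (induction t arbitrary: l)
  case (Suc t)
  have "(\<lambda>\<omega>. (\<lambda>p \<omega>. load (lb_step l p) (stl \<omega>) t) (shd \<omega>) \<omega>) \<in> pair_space n \<rightarrow>\<^sub>M count_space UNIV"
    by (rule measurable_compose_countable[OF _ measurable_shd_pair_space])
       (rule measurable_compose[OF measurable_stl_pair_space Suc.IH])
  then show ?case
    by (simp only: load_Suc_stl)
qed simp

lemma pred_load: "Measurable.pred (pair_space n) (\<lambda>\<omega>. R (load l \<omega> t))"
  by (rule measurable_compose[OF measurable_load]) simp

text \<open>The first pair is uniform on the node pairs and independent of the rest of the stream.\<close>

lemma measure_pair_space_first_step:
  assumes "n \<ge> 2" and A: "\<And>l. Measurable.pred (pair_space n) (A l)"
  shows "measure (pair_space n) {\<omega> \<in> space (pair_space n). A (lb_step l (shd \<omega>)) (stl \<omega>)} =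
    pair_mean n (\<lambda>p. measure (pair_space n) {\<omega> \<in> space (pair_space n). A (lb_step l p) \<omega>})"
proof -
  let ?M = "measure_pmf (pmf_of_set (node_pairs n))"
  let ?P = "\<lambda>p. measure (pair_space n) {\<omega> \<in> space (pair_space n). A (lb_step l p) \<omega>}"
  have "Measurable.pred (pair_space n) (\<lambda>\<omega>. (\<lambda>p \<omega>. A (lb_step l p) (stl \<omega>)) (shd \<omega>) \<omega>)"
    by (rule measurable_compose_countable[OF _ measurable_shd_pair_space])
       (rule measurable_compose[OF measurable_stl_pair_space A])
  then have "ennreal (measure (pair_space n) {\<omega> \<in> space (pair_space n). A (lb_step l (shd \<omega>)) (stl \<omega>)})
      = (\<integral>\<^sup>+p. ennreal (?P p) \<partial>?M)"
    unfolding pair_space_def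
    by (subst prob_space.prob_stream_space[OF prob_space_measure_pmf]) (simp_all add: pred_def)
  also have "\<dots> = ennreal (pair_mean n ?P)"
    using finite_node_pairs node_pairs_nonempty[OF \<open>n \<ge> 2\<close>]
    by (simp add: nn_integral_pmf_of_set pair_mean_def ennreal_of_nat_eq_real_of_nat divide_ennreal sum_nonneg
        card_gt_0_iff)
  finally show ?thesis
    by (simp add: pair_mean_def sum_nonneg divide_nonneg_nonneg)
qed

lemma AE_pair_space_sset: "n \<ge> 2 \<Longrightarrow> AE \<omega> in pair_space n. sset \<omega> \<subseteq> node_pairs n"
  unfolding pair_space_def subset_eq stream_all_iff[symmetric]
  using finite_node_pairs[of n] node_pairs_nonempty[of n]
  by (intro prob_space.AE_stream_all prob_space_measure_pmf)
     (simp_all add: AE_measure_pmf_iff measurable_cong_sets[OF sets_measure_pmf_count_space refl])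

definition prob_load :: "nat \<Rightarrow> (nat \<Rightarrow> int) \<Rightarrow> nat \<Rightarrow> ((nat \<Rightarrow> int) \<Rightarrow> bool) \<Rightarrow> real" where
  "prob_load n l t R = measure (pair_space n) {\<omega> \<in> space (pair_space n). R (load l \<omega> t)}"

lemma prob_load_0: "prob_load n l 0 R = (if R l then 1 else 0)"
  using prob_space.prob_space[OF prob_space_pair_space] by (simp add: prob_load_def)

lemma prob_load_Suc:
  "n \<ge> 2 \<Longrightarrow> prob_load n l (Suc t) R = pair_mean n (\<lambda>p. prob_load n (lb_step l p) t R)"
  unfolding prob_load_def load_Suc_stl by (rule measure_pair_space_first_step[OF _ pred_load])

definition step_invariant :: "nat \<Rightarrow> ((nat \<Rightarrow> int) \<Rightarrow> bool) \<Rightarrow> bool" where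
  "step_invariant n P \<longleftrightarrow> (\<forall>l. \<forall>p\<in>node_pairs n. P l \<longrightarrow> P (lb_step l p))"

lemma step_invariant_load:
  assumes "step_invariant n P" "sset \<omega> \<subseteq> node_pairs n" "P (load l \<omega> s)" "s \<le> t"
  shows "P (load l \<omega> t)"
  using assms(4,3)
proof (induction t rule: dec_induct)
  case (step k)
  have "\<omega> !! k \<in> node_pairs n"
    using assms(2) snth_sset by blast
  with step assms(1) show ?case
    by (simp add: step_invariant_def)
qed

lemma prob_load_not_invariant_antimono:
  assumes "n \<ge> 2" "step_invariant n P" "s \<le> t"
  shows "prob_load n l t (\<lambda>l. \<not> P l) \<le> prob_load n l s (\<lambda>l. \<not> P l)"
  unfolding prob_load_def
proof (rule finite_measure.finite_measure_mono_AE)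
  show "finite_measure (pair_space n)"
    using prob_space_pair_space by (rule prob_space.axioms)
  show "AE \<omega> in pair_space n. \<omega> \<in> {\<omega> \<in> space (pair_space n). \<not> P (load l \<omega> t)} \<longrightarrow>
      \<omega> \<in> {\<omega> \<in> space (pair_space n). \<not> P (load l \<omega> s)}"
    using AE_pair_space_sset[OF assms(1)] by eventually_elim (use assms step_invariant_load in blast)
  show "{\<omega> \<in> space (pair_space n). \<not> P (load l \<omega> s)} \<in> sets (pair_space n)"
    using pred_load[where R = "\<lambda>l. \<not> P l" and t = s] unfolding pred_def .
qed

text \<open>The left-hand side is the expected number of steps before \<open>N\<close> at which \<open>P\<close> fails.\<close>

lemma sum_prob_load_not_le:
  assumes "n \<ge> 2" "step_invariant n I"
    and V_nonneg: "\<And>l. I l \<Longrightarrow> 0 \<le> V l"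
    and V_step: "\<And>l p. I l \<Longrightarrow> p \<in> node_pairs n \<Longrightarrow> V (lb_step l p) \<le> V l"
    and V_drop: "\<And>l. I l \<Longrightarrow> \<not> P l \<Longrightarrow> \<exists>p\<in>node_pairs n. V (lb_step l p) \<le> V l - 1"
    and "I l"
  shows "(\<Sum>t<N. prob_load n l t (\<lambda>l. \<not> P l)) \<le> real (card (node_pairs n)) * V l"
  using \<open>I l\<close>
proof (induction N arbitrary: l)
  case 0
  then show ?case
    using V_nonneg by simp
next
  case (Suc N)
  let ?S = "node_pairs n" and ?f = "\<lambda>l t. prob_load n l t (\<lambda>l. \<not> P l)"
  have I_step: "I (lb_step l p)" if "p \<in> ?S" for p
    using assms(2) Suc.prems that by (auto simp: step_invariant_def)
  have card_S: "real (card ?S) > 0"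
    using finite_node_pairs node_pairs_nonempty[OF \<open>n \<ge> 2\<close>] by (simp add: card_gt_0_iff)
  have "(\<Sum>t<N. ?f l (Suc t)) = (\<Sum>p\<in>?S. \<Sum>t<N. ?f (lb_step l p) t) / real (card ?S)"
    unfolding prob_load_Suc[OF \<open>n \<ge> 2\<close>] pair_mean_def
    by (simp add: sum_divide_distrib[symmetric] sum.swap[of _ ?S])
  also have "\<dots> \<le> (\<Sum>p\<in>?S. real (card ?S) * V (lb_step l p)) / real (card ?S)"
    using Suc.IH I_step by (intro divide_right_mono sum_mono) auto
  also have "\<dots> = (\<Sum>p\<in>?S. V (lb_step l p))"
    using card_S by (simp add: sum_distrib_left[symmetric])
  finally have later: "(\<Sum>t<N. ?f l (Suc t)) \<le> (\<Sum>p\<in>?S. V (lb_step l p))" .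
  have now: "?f l 0 + (\<Sum>p\<in>?S. V (lb_step l p)) \<le> real (card ?S) * V l"
  proof (cases "P l")
    case True
    then show ?thesis
      using sum_mono[of ?S "\<lambda>p. V (lb_step l p)" "\<lambda>_. V l"] V_step[OF Suc.prems]
      by (simp add: prob_load_0)
  next
    case False
    then obtain p0 where p0: "p0 \<in> ?S" "V (lb_step l p0) \<le> V l - 1"
      using V_drop[OF Suc.prems] by blast
    have "(\<Sum>p\<in>?S. V (lb_step l p)) \<le> (\<Sum>p\<in>?S. V l - (if p = p0 then 1 else 0))"
      using p0 V_step[OF Suc.prems] by (intro sum_mono) auto
    also have "\<dots> = real (card ?S) * V l - 1"
      using p0(1) finite_node_pairs by (simp add: sum_subtractf)
    finally show ?thesis
      using False by (simp add: prob_load_0)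
  qed
  show ?case
    unfolding sum.lessThan_Suc_shift using later now by linarith
qed

lemma prob_load_not_le_div:
  assumes "n \<ge> 2" "step_invariant n I" "step_invariant n P"
    and "\<And>l. I l \<Longrightarrow> 0 \<le> V l"
    and "\<And>l p. I l \<Longrightarrow> p \<in> node_pairs n \<Longrightarrow> V (lb_step l p) \<le> V l"
    and "\<And>l. I l \<Longrightarrow> \<not> P l \<Longrightarrow> \<exists>p\<in>node_pairs n. V (lb_step l p) \<le> V l - 1"
    and "I l" "N > 0"
  shows "prob_load n l N (\<lambda>l. \<not> P l) \<le> real (card (node_pairs n)) * V l / real N"
proof -
  have "real N * prob_load n l N (\<lambda>l. \<not> P l) \<le> (\<Sum>t<N. prob_load n l t (\<lambda>l. \<not> P l))"
    using sum_mono[of "{..<N}" "\<lambda>_. prob_load n l N (\<lambda>l. \<not> P l)" "\<lambda>t. prob_load n l t (\<lambda>l. \<not> P l)"]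
      prob_load_not_invariant_antimono[OF assms(1,3)] by simp
  also have "\<dots> \<le> real (card (node_pairs n)) * V l"
    by (rule sum_prob_load_not_le[OF assms(1,2,4-7)])
  finally show ?thesis
    using \<open>N > 0\<close> by (simp add: field_simps)
qed

lemma prob_load_not_le_geometric:
  assumes "n \<ge> 2" "step_invariant n I" "q \<le> 1"
    and V_nonneg: "\<And>l. I l \<Longrightarrow> 0 \<le> V l" and V_ge_1: "\<And>l. I l \<Longrightarrow> \<not> P l \<Longrightarrow> 1 \<le> V l"
    and V_drift: "\<And>l. I l \<Longrightarrow> pair_mean n (\<lambda>p. V (lb_step l p)) \<le> (1 - q) * V l"
    and "I l"
  shows "prob_load n l t (\<lambda>l. \<not> P l) \<le> V l * (1 - q)^t"
  using \<open>I l\<close>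
proof (induction t arbitrary: l)
  case 0
  then show ?case
    using V_nonneg V_ge_1 by (simp add: prob_load_0)
next
  case (Suc t)
  have "prob_load n l (Suc t) (\<lambda>l. \<not> P l) \<le> pair_mean n (\<lambda>p. (1 - q)^t * V (lb_step l p))"
    unfolding prob_load_Suc[OF \<open>n \<ge> 2\<close>]
    using Suc.IH assms(2) Suc.prems by (intro pair_mean_mono) (auto simp: step_invariant_def mult.commute)
  also have "\<dots> \<le> (1 - q)^t * ((1 - q) * V l)"
    unfolding pair_mean_cmult using V_drift[OF Suc.prems] \<open>q \<le> 1\<close> by (intro mult_left_mono) auto
  finally show ?case
    by (simp add: algebra_simps)
qed

definition fails_after_first_hit ::
    "((nat \<Rightarrow> int) \<Rightarrow> bool) \<Rightarrow> ((nat \<Rightarrow> int) \<Rightarrow> bool) \<Rightarrow> nat \<Rightarrow> nat \<Rightarrow> (nat \<Rightarrow> int) \<Rightarrow> (nat \<times> nat) stream \<Rightarrow> bool"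
  where "fails_after_first_hit W P \<tau> N l \<omega> \<longleftrightarrow>
    (\<exists>s<N. W (load l \<omega> s) \<and> (\<forall>s'<s. \<not> W (load l \<omega> s')) \<and> \<not> P (load l \<omega> (s + \<tau>)))"

lemma fails_after_first_hit_Suc:
  "fails_after_first_hit W P \<tau> (Suc N) l \<omega> \<longleftrightarrow>
    (if W l then \<not> P (load l \<omega> \<tau>) else fails_after_first_hit W P \<tau> N (lb_step l (shd \<omega>)) (stl \<omega>))"
  unfolding fails_after_first_hit_def Ex_less_Suc2 All_less_Suc2
  by (simp del: load.simps(2) add: load_Suc_stl)

lemma pred_fails_after_first_hit:
  "Measurable.pred (pair_space n) (fails_after_first_hit W P \<tau> N l)"
  unfolding fails_after_first_hit_def
  by (intro pred_intros_countable pred_intros_logic pred_load measurable_const) auto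

text \<open>The strong Markov property at the first time \<open>W\<close> holds.\<close>

lemma measure_fails_after_first_hit_le:
  assumes "n \<ge> 2" "step_invariant n I" "0 \<le> B"
    and B: "\<And>l. I l \<Longrightarrow> W l \<Longrightarrow> prob_load n l \<tau> (\<lambda>l. \<not> P l) \<le> B" and "I l"
  shows "measure (pair_space n) {\<omega> \<in> space (pair_space n). fails_after_first_hit W P \<tau> N l \<omega>} \<le> B"
  using \<open>I l\<close>
proof (induction N arbitrary: l)
  case 0
  then show ?case
    using \<open>0 \<le> B\<close> by (simp add: fails_after_first_hit_def)
next
  case (Suc N)
  show ?case
  proof (cases "W l")
    case True
    then show ?thesis
      using B[OF Suc.prems True] by (simp add: fails_after_first_hit_Suc prob_load_def)
  next
    case False
    then have "measure (pair_space n) {\<omega> \<in> space (pair_space n). fails_after_first_hit W P \<tau> (Suc N) l \<omega>} =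
        pair_mean n (\<lambda>p. measure (pair_space n) {\<omega> \<in> space (pair_space n). fails_after_first_hit W P \<tau> N (lb_step l p) \<omega>})"
      by (simp add: fails_after_first_hit_Suc)
         (rule measure_pair_space_first_step[OF \<open>n \<ge> 2\<close> pred_fails_after_first_hit])
    also have "\<dots> \<le> B"
      using Suc.IH Suc.prems assms(2) by (intro pair_mean_le[OF \<open>n \<ge> 2\<close>]) (auto simp: step_invariant_def)
    finally show ?thesis .
  qed
qed

lemma step_invariant_sum_loads: "step_invariant n (\<lambda>l. (\<Sum>i<n. l i) = s)"
  by (simp add: step_invariant_def sum_loads_lb_step)

lemma step_invariant_loads_within: "step_invariant n (loads_within n lo hi)"
  by (simp add: step_invariant_def loads_within_lb_step)

lemma step_invariant_settled: "step_invariant n (settled d n a)"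
  unfolding step_invariant_def settled_def
  using Phi_lb_step_le loads_within_lb_step by (meson le_less_trans)

lemma total_excess_pair_mean_le:
  fixes l :: "nat \<Rightarrow> int"
  assumes "n \<ge> 2" "d > 0" and sum: "real_of_int (\<Sum>i<n. l i) = a * real n"
    and W: "loads_within n (a - d) (a + d) l" and r: "\<bar>real_of_int r - a\<bar> \<le> 1/2"
  shows "pair_mean n (\<lambda>p. real_of_int (total_excess n r (lb_step l p)))
    \<le> (1 - 1 / (d * (2 * d + 3) * real n)) * real_of_int (total_excess n r l)"
proof -
  let ?S = "node_pairs n" and ?E = "real_of_int (total_excess n r l)" and ?\<kappa> = "d * (2 * d + 3)"
  have S: "0 < real (card ?S)" "real (card ?S) \<le> real n * real n"
    using finite_node_pairs node_pairs_nonempty[OF \<open>n \<ge> 2\<close>] card_node_pairs_le[of n]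
    by (simp_all add: card_gt_0_iff flip: of_nat_mult)
  have \<kappa>: "0 < ?\<kappa>"
    using \<open>d > 0\<close> by simp
  have mean: "\<Sigma> / C \<le> E - E * m / (k * C)" if "0 < C" "0 < k" "E * m \<le> k * (C * E - \<Sigma>)"
    for \<Sigma> C E k m :: real
    using that by (simp add: field_simps)
  have "?E * real n \<le> ?\<kappa> * (real (card ?S) * ?E - (\<Sum>p\<in>?S. real_of_int (total_excess n r (lb_step l p))))"
    using total_excess_decrease[OF sum W r] \<open>d > 0\<close> by (simp add: sum_subtractf)
  then have "pair_mean n (\<lambda>p. real_of_int (total_excess n r (lb_step l p))) \<le> ?E - ?E * real n / (?\<kappa> * real (card ?S))"
    unfolding pair_mean_def using S(1) \<kappa> by (rule mean[rotated 2])
  also have "\<dots> \<le> ?E - ?E * real n / (?\<kappa> * (real n * real n))"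
    using S \<kappa> total_excess_nonneg[of n r l] \<open>n \<ge> 2\<close> \<open>d > 0\<close>
    by (intro diff_left_mono divide_left_mono mult_left_mono mult_nonneg_nonneg mult_pos_pos) auto
  also have "\<dots> = (1 - 1 / (?\<kappa> * real n)) * ?E"
  proof -
    have eq: "E - E * m / (k * (m * m)) = (1 - 1 / (k * m)) * E" if "0 < k" "0 < m" for E k m :: real
      using that by (simp add: field_simps)
    show ?thesis
      by (rule eq) (use \<open>n \<ge> 2\<close> \<kappa> in auto)
  qed
  finally show ?thesis .
qed

lemma prob_load_not_near_round_le:
  fixes l :: "nat \<Rightarrow> int"
  assumes "n \<ge> 2" "d \<ge> 1" and sum: "real_of_int (\<Sum>i<n. l i) = a * real n"
    and W: "loads_within n (a - d) (a + d) l" and r: "\<bar>real_of_int r - a\<bar> \<le> 1/2"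
  shows "prob_load n l t (\<lambda>l. \<not> loads_within n (of_int (r - 1)) (of_int (r + 1)) l)
    \<le> d * real n * (1 - 1 / (d * (2 * d + 3) * real n))^t"
proof -
  define q where "q = 1 / (d * (2 * d + 3) * real n)"
  define I where "I = (\<lambda>l'. (\<Sum>i<n. l' i) = (\<Sum>i<n. l i) \<and> loads_within n (a - d) (a + d) l')"
  have inv: "step_invariant n I"
    using step_invariant_sum_loads step_invariant_loads_within unfolding I_def step_invariant_def by blast
  have "1 * 1 \<le> d * (2 * d + 3)"
    using \<open>d \<ge> 1\<close> by (intro mult_mono) auto
  then have "1 * 1 \<le> d * (2 * d + 3) * real n"
    using \<open>n \<ge> 2\<close> by (intro mult_mono) auto
  then have q: "q \<le> 1"
    unfolding q_def by simp
  have drop: "1 \<le> real_of_int (total_excess n r l')"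
    if "\<not> loads_within n (of_int (r - 1)) (of_int (r + 1)) l'" for l'
    using total_excess_eq_0_iff[of n r l'] total_excess_nonneg[of n r l'] that by linarith
  have drift: "pair_mean n (\<lambda>p. real_of_int (total_excess n r (lb_step l' p)))
      \<le> (1 - q) * real_of_int (total_excess n r l')" if "I l'" for l'
    using that sum \<open>n \<ge> 2\<close> \<open>d \<ge> 1\<close> r unfolding q_def I_def by (intro total_excess_pair_mean_le) auto
  have "prob_load n l t (\<lambda>l. \<not> loads_within n (of_int (r - 1)) (of_int (r + 1)) l)
      \<le> real_of_int (total_excess n r l) * (1 - q)^t"
    by (rule prob_load_not_le_geometric[OF \<open>n \<ge> 2\<close> inv q _ drop drift])
       (auto simp: total_excess_nonneg I_def W)
  also have "\<dots> \<le> d * real n * (1 - q)^t"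
    using total_excess_le[OF W r] \<open>d \<ge> 1\<close> q by (intro mult_right_mono) auto
  finally show ?thesis
    unfolding q_def .
qed

lemma prob_load_not_settled_le:
  fixes l :: "nat \<Rightarrow> int"
  assumes "n \<ge> 2" "d \<ge> 1" and sum: "real_of_int (\<Sum>i<n. l i) = a * real n" and "N > 0"
  shows "prob_load n l N (\<lambda>l. \<not> settled d n a l)
    \<le> real (card (node_pairs n)) * real_of_int (sum_squares n l) / real N"
proof -
  define I where "I = (\<lambda>l'. (\<Sum>i<n. l' i) = (\<Sum>i<n. l i))"
  have drop: "\<exists>p\<in>node_pairs n. real_of_int (sum_squares n (lb_step l' p)) \<le> real_of_int (sum_squares n l') - 1"
    if I: "I l'" and unsettled: "\<not> settled d n a l'" for l'
  proof -
    have "real_of_int (\<Sum>i<n. l' i) = a * real n"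
      using I sum unfolding I_def by simp
    then obtain u v where uv: "(u, v) \<in> node_pairs n" "\<bar>l' u - l' v\<bar> \<ge> 2"
      using unbalanced_pair_if_not_settled[OF _ \<open>d \<ge> 1\<close> _ unsettled] \<open>n \<ge> 2\<close> by auto
    then have "real_of_int (sum_squares n (lb_step l' (u, v))) \<le> real_of_int (sum_squares n l' - 1)"
      unfolding of_int_le_iff by (rule sum_squares_lb_step(2))
    then show ?thesis
      using uv(1) by (intro bexI[of _ "(u, v)"]) simp_all
  qed
  have inv: "step_invariant n I"
    unfolding I_def by (rule step_invariant_sum_loads)
  have step: "real_of_int (sum_squares n (lb_step l' p)) \<le> real_of_int (sum_squares n l')"
    if "p \<in> node_pairs n" for l' p
    using that sum_squares_lb_step(1)[of "fst p" "snd p" n l'] by simp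
  show ?thesis
    by (rule prob_load_not_le_div[OF \<open>n \<ge> 2\<close> inv step_invariant_settled _ step drop _ \<open>N > 0\<close>])
       (simp_all add: sum_squares_nonneg I_def)
qed

lemma hit_from_enat_le:
  assumes "s \<le> t" "P t"
  shows "\<exists>m. hit_from (enat s) P = enat m \<and> s \<le> m \<and> m \<le> t \<and> P m"
proof -
  define m where "m = (LEAST t. s \<le> t \<and> P t)"
  have "s \<le> m \<and> P m"
    unfolding m_def by (rule LeastI[of _ t]) (use assms in auto)
  moreover have "m \<le> t"
    unfolding m_def by (rule Least_le) (use assms in auto)
  moreover have "hit_from (enat s) P = enat m"
    unfolding hit_from_def m_def using assms by auto
  ultimately show ?thesis
    by blast
qed

lemma hit_from_eq_enat_iff:
  "hit_from (enat s) P = enat m \<longleftrightarrow> s \<le> m \<and> P m \<and> (\<forall>t. s \<le> t \<and> t < m \<longrightarrow> \<not> P t)"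
proof
  assume hit: "hit_from (enat s) P = enat m"
  then obtain t where t: "s \<le> t" "P t"
    unfolding hit_from_def by (auto split: if_splits)
  have m: "m = (LEAST t. s \<le> t \<and> P t)"
    using hit t unfolding hit_from_def by (auto split: if_splits)
  have "s \<le> m \<and> P m"
    unfolding m by (rule LeastI[of _ t]) (use t in auto)
  moreover have "\<not> P t'" if "s \<le> t'" "t' < m" for t'
    using not_less_Least[of t' "\<lambda>t. s \<le> t \<and> P t"] that unfolding m by auto
  ultimately show "s \<le> m \<and> P m \<and> (\<forall>t. s \<le> t \<and> t < m \<longrightarrow> \<not> P t)"
    by blast
next
  assume m: "s \<le> m \<and> P m \<and> (\<forall>t. s \<le> t \<and> t < m \<longrightarrow> \<not> P t)"
  then have "(LEAST t. s \<le> t \<and> P t) = m"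
    by (intro Least_equality) (auto simp: not_less[symmetric])
  then show "hit_from (enat s) P = enat m"
    unfolding hit_from_def using m by auto
qed

lemma measurable_hit_from:
  assumes k: "k \<in> M \<rightarrow>\<^sub>M count_space UNIV" and R: "\<And>t. Measurable.pred M (\<lambda>\<omega>. R \<omega> t)"
  shows "(\<lambda>\<omega>. hit_from (k \<omega>) (R \<omega>)) \<in> M \<rightarrow>\<^sub>M count_space UNIV"
proof (rule measurable_compose_countable[OF _ k])
  fix j :: enat
  show "(\<lambda>\<omega>. hit_from j (R \<omega>)) \<in> M \<rightarrow>\<^sub>M count_space UNIV"
  proof (cases j)
    case (enat s)
    show ?thesis
      unfolding measurable_count_space_eq2_countable
    proof (intro conjI ballI)
      fix x :: enat
      have "Measurable.pred M (\<lambda>\<omega>. hit_from j (R \<omega>) = x)"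
      proof (cases x)
        case (enat m)
        show ?thesis
          unfolding \<open>j = enat s\<close> enat hit_from_eq_enat_iff using R by measurable
      next
        case infinity
        have never: "(\<lambda>\<omega>. hit_from j (R \<omega>) = \<infinity>) = (\<lambda>\<omega>. \<forall>t. s \<le> t \<longrightarrow> \<not> R \<omega> t)"
          unfolding \<open>j = enat s\<close> hit_from_def by auto
        show ?thesis
          unfolding infinity never using R by measurable
      qed
      then show "(\<lambda>\<omega>. hit_from j (R \<omega>)) -` {x} \<inter> space M \<in> sets M"
        unfolding pred_def by (simp add: vimage_def Int_def conj_commute)
    qed simp
  next
    case infinity
    then show ?thesis
      by (simp add: hit_from_def)
  qed
qed

lemma loads_within_iff_minload_maxload:
  assumes "n \<ge> 1"
  shows "loads_within n lo hi l \<longleftrightarrow> lo \<le> real_of_int (minload n l) \<and> real_of_int (maxload n l) \<le> hi"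
proof -
  have A: "finite (l ` {..<n})" "l ` {..<n} \<noteq> {}"
    using assms by (auto simp: lessThan_empty_iff)
  have "real_of_int (maxload n l) \<le> hi \<longleftrightarrow> (\<forall>i<n. real_of_int (l i) \<le> hi)"
    unfolding maxload_def le_floor_iff[symmetric] Max_le_iff[OF A] by auto
  moreover have "lo \<le> real_of_int (minload n l) \<longleftrightarrow> (\<forall>i<n. lo \<le> real_of_int (l i))"
    unfolding minload_def ceiling_le_iff[symmetric] Min_ge_iff[OF A] by auto
  ultimately show ?thesis
    unfolding loads_within_def by auto
qed

lemma T2_eq:
  "n \<ge> 1 \<Longrightarrow> T2 c n l0 \<omega> =
    hit_from (T1 n l0 \<omega>) (\<lambda>t. loads_within n (avg n l0 - 2 * c) (avg n l0 + 2 * c) (load l0 \<omega> t))"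
  unfolding T2_def loads_within_iff_minload_maxload by (simp add: conj_commute)

lemma T3_eq:
  "n \<ge> 1 \<Longrightarrow> T3 c n l0 \<omega> = hit_from (T2 c n l0 \<omega>)
    (\<lambda>t. loads_within n (of_int (round (avg n l0) - 1)) (of_int (round (avg n l0) + 1)) (load l0 \<omega> t))"
  unfolding T3_def loads_within_iff_minload_maxload of_int_le_iff by (simp add: conj_commute)

lemma measurable_T2_T3:
  "(\<lambda>\<omega>. T2 c n l0 \<omega>) \<in> pair_space n \<rightarrow>\<^sub>M count_space UNIV"
  "(\<lambda>\<omega>. T3 c n l0 \<omega>) \<in> pair_space n \<rightarrow>\<^sub>M count_space UNIV"
proof -
  have T1: "(\<lambda>\<omega>. T1 n l0 \<omega>) \<in> pair_space n \<rightarrow>\<^sub>M count_space UNIV"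
    unfolding T1_def by (rule measurable_hit_from[OF _ pred_load]) simp
  show T2: "(\<lambda>\<omega>. T2 c n l0 \<omega>) \<in> pair_space n \<rightarrow>\<^sub>M count_space UNIV"
    unfolding T2_def by (rule measurable_hit_from[OF T1 pred_load])
  show "(\<lambda>\<omega>. T3 c n l0 \<omega>) \<in> pair_space n \<rightarrow>\<^sub>M count_space UNIV"
    unfolding T3_def by (rule measurable_hit_from[OF T2 pred_load])
qed

text \<open>Once the configuration is settled at time \<open>N\<close>, the window around the average was entered
  for the first time at some \<open>s \<le> T2 \<le> N\<close>; if the loads are then within \<open>1\<close> of
  \<open>round (avg n l0)\<close> at time \<open>s + \<tau>\<close>, they stay so, and \<open>T3 \<le> T2 + \<tau>\<close>.\<close>

lemma T3_le_T2_plus: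
  fixes l0 :: "nat \<Rightarrow> int" and c :: real
  assumes "n \<ge> 1" "sset \<omega> \<subseteq> node_pairs n" and settled: "settled (2 * c) n (avg n l0) (load l0 \<omega> N)"
    and success: "\<not> fails_after_first_hit (loads_within n (avg n l0 - 2 * c) (avg n l0 + 2 * c))
      (loads_within n (of_int (round (avg n l0) - 1)) (of_int (round (avg n l0) + 1))) \<tau> (Suc N) l0 \<omega>"
  shows "\<exists>t2 t3. T2 c n l0 \<omega> = enat t2 \<and> T3 c n l0 \<omega> = enat t3 \<and> t3 \<le> t2 + \<tau>"
proof -
  let ?W = "loads_within n (avg n l0 - 2 * c) (avg n l0 + 2 * c)"
  let ?P = "loads_within n (of_int (round (avg n l0) - 1)) (of_int (round (avg n l0) + 1))"
  obtain t1 where t1: "T1 n l0 \<omega> = enat t1" "t1 \<le> N"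
    using hit_from_enat_le[of 0 N "\<lambda>t. Phi n (avg n l0) (load l0 \<omega> t) < real n"] settled
    unfolding T1_def settled_def zero_enat_def by blast
  obtain t2 where t2: "T2 c n l0 \<omega> = enat t2" "t2 \<le> N" "?W (load l0 \<omega> t2)"
    using hit_from_enat_le[of t1 N "\<lambda>t. ?W (load l0 \<omega> t)"] settled t1
    unfolding T2_eq[OF \<open>n \<ge> 1\<close>] settled_def by auto
  define s where "s = (LEAST s. ?W (load l0 \<omega> s))"
  have sW: "?W (load l0 \<omega> s)"
    unfolding s_def by (rule LeastI[of _ t2]) (rule t2(3))
  have s_le: "s \<le> t2"
    unfolding s_def by (rule Least_le) (rule t2(3))
  have s_first: "\<forall>s'<s. \<not> ?W (load l0 \<omega> s')"
    unfolding s_def using not_less_Least by blast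
  have "s < Suc N"
    using s_le t2(2) by simp
  then have "?P (load l0 \<omega> (s + \<tau>))"
    using success sW s_first unfolding fails_after_first_hit_def by blast
  then have "?P (load l0 \<omega> (t2 + \<tau>))"
    by (rule step_invariant_load[OF step_invariant_loads_within \<open>sset \<omega> \<subseteq> node_pairs n\<close>]) (use s_le in simp)
  then obtain t3 where "T3 c n l0 \<omega> = enat t3" "t3 \<le> t2 + \<tau>"
    using hit_from_enat_le[of t2 "t2 + \<tau>" "\<lambda>t. ?P (load l0 \<omega> t)"] t2(1)
    unfolding T3_eq[OF \<open>n \<ge> 1\<close>] by auto
  with t2(1) show ?thesis
    by blast
qed

lemma sets_T3_within:
  "{\<omega> \<in> space (pair_space n). \<exists>t2 t3 :: nat. T2 c n l0 \<omega> = enat t2 \<and> T3 c n l0 \<omega> = enat t3 \<and>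
     real t3 \<le> real t2 + X} \<in> sets (pair_space n)"
proof -
  have "Measurable.pred (pair_space n) (\<lambda>\<omega>. T2 c n l0 \<omega> = enat t)"
    "Measurable.pred (pair_space n) (\<lambda>\<omega>. T3 c n l0 \<omega> = enat t)" for t
    by (rule measurable_compose[OF measurable_T2_T3(1)] measurable_compose[OF measurable_T2_T3(2)], simp)+
  then have "Measurable.pred (pair_space n) (\<lambda>\<omega>. \<exists>t2 t3 :: nat. T2 c n l0 \<omega> = enat t2 \<and>
      T3 c n l0 \<omega> = enat t3 \<and> real t3 \<le> real t2 + X)"
    by (intro pred_intros_countable pred_intros_logic) simp_all
  then show ?thesis
    unfolding pred_def .
qed

lemma AE_T3_within:
  fixes c X :: real and l0 :: "nat \<Rightarrow> int"
  assumes "n \<ge> 2" "0 \<le> X"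
  shows "AE \<omega> in pair_space n. settled (2 * c) n (avg n l0) (load l0 \<omega> N) \<longrightarrow>
    \<not> fails_after_first_hit (loads_within n (avg n l0 - 2 * c) (avg n l0 + 2 * c))
      (loads_within n (of_int (round (avg n l0) - 1)) (of_int (round (avg n l0) + 1))) (nat \<lfloor>X\<rfloor>) (Suc N) l0 \<omega> \<longrightarrow>
    (\<exists>t2 t3 :: nat. T2 c n l0 \<omega> = enat t2 \<and> T3 c n l0 \<omega> = enat t3 \<and> real t3 \<le> real t2 + X)"
  using AE_pair_space_sset[OF \<open>n \<ge> 2\<close>]
proof eventually_elim
  case (elim \<omega>)
  have "real (nat \<lfloor>X\<rfloor>) \<le> X"
    using \<open>0 \<le> X\<close> by linarith
  then show ?case
    using T3_le_T2_plus[of n \<omega> c l0 N "nat \<lfloor>X\<rfloor>"] elim \<open>n \<ge> 2\<close> by force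
qed

lemma measure_misses_round_after_window_le:
  fixes c :: real and l0 :: "nat \<Rightarrow> int"
  assumes "n \<ge> 2" "c \<ge> 1/2"
  shows "measure (pair_space n) {\<omega> \<in> space (pair_space n).
      fails_after_first_hit (loads_within n (avg n l0 - 2 * c) (avg n l0 + 2 * c))
        (loads_within n (of_int (round (avg n l0) - 1)) (of_int (round (avg n l0) + 1))) \<tau> N l0 \<omega>}
    \<le> 2 * c * real n * (1 - 1 / (2 * c * (4 * c + 3) * real n)) ^ \<tau>"
proof (rule measure_fails_after_first_hit_le[OF \<open>n \<ge> 2\<close> step_invariant_sum_loads])
  have r: "\<bar>real_of_int (round (avg n l0)) - avg n l0\<bar> \<le> 1/2"
    using of_int_round_abs_le[of "avg n l0"] by (simp add: abs_minus_commute)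
  show "prob_load n l \<tau> (\<lambda>l. \<not> loads_within n (of_int (round (avg n l0) - 1)) (of_int (round (avg n l0) + 1)) l)
      \<le> 2 * c * real n * (1 - 1 / (2 * c * (4 * c + 3) * real n)) ^ \<tau>"
    if "(\<Sum>i<n. l i) = (\<Sum>i<n. l0 i)" "loads_within n (avg n l0 - 2 * c) (avg n l0 + 2 * c) l" for l
  proof -
    have "real_of_int (\<Sum>i<n. l i) = avg n l0 * real n"
      using that(1) \<open>n \<ge> 2\<close> unfolding avg_def by simp
    then show ?thesis
      using prob_load_not_near_round_le[OF \<open>n \<ge> 2\<close> _ _ that(2) r] \<open>c \<ge> 1/2\<close> by (simp add: algebra_simps)
  qed
next
  have "1 * 1 \<le> 2 * c * (4 * c + 3)"
    using \<open>c \<ge> 1/2\<close> by (intro mult_mono) auto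
  then have "1 * 1 \<le> 2 * c * (4 * c + 3) * real n"
    using \<open>n \<ge> 2\<close> by (intro mult_mono) auto
  then have "1 / (2 * c * (4 * c + 3) * real n) \<le> 1"
    by (subst divide_le_eq_1_pos) linarith+
  then show "0 \<le> 2 * c * real n * (1 - 1 / (2 * c * (4 * c + 3) * real n)) ^ \<tau>"
    using \<open>c \<ge> 1/2\<close> by simp
qed simp

text \<open>By time \<open>N\<close> the configuration has settled except with probability \<open>O(1/N)\<close>; after the
  window around the average is first reached, the total excess decays geometrically.\<close>

lemma prob_T3_late_le:
  fixes c X :: real and l0 :: "nat \<Rightarrow> int"
  assumes "n \<ge> 2" "c \<ge> 1/2" "0 \<le> X" "N > 0"
  shows "1 - measure (pair_space n) {\<omega> \<in> space (pair_space n). \<exists>t2 t3 :: nat.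
      T2 c n l0 \<omega> = enat t2 \<and> T3 c n l0 \<omega> = enat t3 \<and> real t3 \<le> real t2 + X}
    \<le> 2 * c * real n * (1 - 1 / (2 * c * (4 * c + 3) * real n)) ^ nat \<lfloor>X\<rfloor>
      + real (card (node_pairs n)) * real_of_int (sum_squares n l0) / real N"
proof -
  interpret prob_space "pair_space n"
    by (rule prob_space_pair_space)
  define a \<tau> where "a = avg n l0" and "\<tau> = nat \<lfloor>X\<rfloor>"
  define GS where "GS = {\<omega> \<in> space (pair_space n). \<exists>t2 t3 :: nat.
      T2 c n l0 \<omega> = enat t2 \<and> T3 c n l0 \<omega> = enat t3 \<and> real t3 \<le> real t2 + X}"
  define NS where "NS = {\<omega> \<in> space (pair_space n). \<not> settled (2 * c) n a (load l0 \<omega> N)}"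
  define F where "F = {\<omega> \<in> space (pair_space n). fails_after_first_hit (loads_within n (a - 2 * c) (a + 2 * c))
    (loads_within n (of_int (round a - 1)) (of_int (round a + 1))) \<tau> (Suc N) l0 \<omega>}"
  have NS_ev: "NS \<in> events"
    using pred_load[where R = "\<lambda>l. \<not> settled (2 * c) n a l" and l = l0 and t = N]
    unfolding NS_def pred_def .
  have F_ev: "F \<in> events"
    using pred_fails_after_first_hit unfolding F_def pred_def by blast
  have "measure (pair_space n) NS \<le> real (card (node_pairs n)) * real_of_int (sum_squares n l0) / real N"
    using prob_load_not_settled_le[OF \<open>n \<ge> 2\<close> _ _ \<open>N > 0\<close>] \<open>c \<ge> 1/2\<close> \<open>n \<ge> 2\<close>
    unfolding NS_def prob_load_def a_def avg_def by simp
  moreover have "measure (pair_space n) F \<le> 2 * c * real n * (1 - 1 / (2 * c * (4 * c + 3) * real n)) ^ \<tau>"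
    unfolding F_def a_def by (rule measure_misses_round_after_window_le[OF assms(1,2)])
  moreover have "measure (pair_space n) (space (pair_space n) - GS) \<le> measure (pair_space n) (NS \<union> F)"
  proof (rule finite_measure_mono_AE)
    show "AE \<omega> in pair_space n. \<omega> \<in> space (pair_space n) - GS \<longrightarrow> \<omega> \<in> NS \<union> F"
      using AE_T3_within[OF \<open>n \<ge> 2\<close> \<open>0 \<le> X\<close>, of c l0 N] unfolding GS_def NS_def F_def a_def \<tau>_def
      by eventually_elim auto
    show "NS \<union> F \<in> events"
      using NS_ev F_ev by blast
  qed
  moreover have "measure (pair_space n) (NS \<union> F) \<le> measure (pair_space n) NS + measure (pair_space n) F"
    using NS_ev F_ev by (intro measure_subadditive) (auto simp: emeasure_eq_measure)
  moreover have "measure (pair_space n) (space (pair_space n) - GS) = 1 - measure (pair_space n) GS"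
    using prob_compl[of GS] sets_T3_within unfolding GS_def by simp
  ultimately show ?thesis
    unfolding GS_def \<tau>_def by linarith
qed

lemma measure_T3_within_ge:
  fixes c X :: real and l0 :: "nat \<Rightarrow> int"
  assumes "n \<ge> 2" "c \<ge> 1/2" "0 \<le> X"
  shows "1 - 2 * c * real n * (1 - 1 / (2 * c * (4 * c + 3) * real n)) ^ nat \<lfloor>X\<rfloor>
    \<le> measure (pair_space n) {\<omega> \<in> space (pair_space n). \<exists>t2 t3 :: nat.
      T2 c n l0 \<omega> = enat t2 \<and> T3 c n l0 \<omega> = enat t3 \<and> real t3 \<le> real t2 + X}"
    (is "1 - ?B \<le> ?\<mu>")
proof -
  define Z where "Z = real (card (node_pairs n)) * real_of_int (sum_squares n l0)"
  have "0 \<le> Z"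
    unfolding Z_def using sum_squares_nonneg by simp
  have "1 - ?\<mu> \<le> ?B + e" if "e > 0" for e
  proof -
    obtain N :: nat where N: "Z / e < real N"
      using reals_Archimedean2 by blast
    then have "N > 0"
      using \<open>0 \<le> Z\<close> \<open>e > 0\<close> by (auto intro: gr0I simp: divide_less_0_iff not_less)
    have "Z / real N \<le> e"
      using N \<open>N > 0\<close> \<open>e > 0\<close> by (simp add: field_simps)
    then show ?thesis
      using prob_T3_late_le[OF assms \<open>N > 0\<close>, of l0] unfolding Z_def by simp
  qed
  then have "1 - ?\<mu> \<le> ?B"
    by (rule field_le_epsilon)
  then show ?thesis
    by simp
qed

lemma power_one_minus_inverse_le:
  assumes "k \<ge> 1" "n \<ge> 2"
  shows "real n * (1 - 1 / (k * real n)) ^ nat \<lfloor>2 * k * real n * ln (real n)\<rfloor> \<le> 3 / real n"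
proof -
  define q X where "q = 1 / (k * real n)" and "X = 2 * k * real n * ln (real n)"
  have "1 * 1 \<le> k * real n"
    using assms by (intro mult_mono) auto
  then have q: "0 \<le> q" "q \<le> 1" and qX: "q * X = 2 * ln (real n)"
    unfolding q_def X_def by (auto simp: field_simps)
  have "0 \<le> X"
    unfolding X_def using assms by simp
  then have \<tau>: "X - 1 \<le> real (nat \<lfloor>X\<rfloor>)"
    by linarith
  have "(1 - q) ^ nat \<lfloor>X\<rfloor> \<le> exp (- q) ^ nat \<lfloor>X\<rfloor>"
    using q exp_ge_add_one_self[of "- q"] by (intro power_mono) auto
  also have "\<dots> = exp (- (q * real (nat \<lfloor>X\<rfloor>)))"
    by (simp add: exp_of_nat_mult[symmetric] mult.commute)
  also have "\<dots> \<le> exp (1 - 2 * ln (real n))"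
    using mult_left_mono[OF \<tau> q(1)] q qX by (simp add: algebra_simps)
  also have "\<dots> = exp 1 / (real n)^2"
    using assms by (simp add: exp_diff exp_double)
  finally have "real n * (1 - q) ^ nat \<lfloor>X\<rfloor> \<le> real n * (exp 1 / (real n)^2)"
    by (rule mult_left_mono) simp
  also have "\<dots> \<le> 3 / real n"
    using exp_le assms by (simp add: power2_eq_square divide_right_mono)
  finally show ?thesis
    unfolding q_def X_def .
qed

theorem lemma5:
  fixes c :: real
  assumes "c \<ge> 10"
  shows "\<exists>C K :: real. \<forall>n :: nat. \<forall>l0 :: nat \<Rightarrow> int. n \<ge> 2 \<longrightarrow>
     measure (pair_space n)
       {\<omega> \<in> space (pair_space n). \<exists>t2 t3 :: nat.
          T2 c n l0 \<omega> = enat t2 \<and> T3 c n l0 \<omega> = enat t3 \<and>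
          real t3 \<le> real t2 + C * real n * ln (real n)}
     \<ge> 1 - K / real n"
proof (intro exI allI impI)
  fix n :: nat and l0 :: "nat \<Rightarrow> int"
  assume "n \<ge> 2"
  define k where "k = 2 * c * (4 * c + 3)"
  let ?X = "2 * k * real n * ln (real n)"
  let ?B = "(1 - 1 / (k * real n)) ^ nat \<lfloor>?X\<rfloor>"
  have "1 * 1 \<le> k"
    unfolding k_def using assms by (intro mult_mono) auto
  then have "2 * c * (real n * ?B) \<le> 2 * c * (3 / real n)"
    using power_one_minus_inverse_le[of k n] \<open>n \<ge> 2\<close> assms by (intro mult_left_mono) auto
  then have "1 - 6 * c / real n \<le> 1 - 2 * c * real n * ?B"
    by (simp add: mult.assoc)
  also have "\<dots> \<le> measure (pair_space n) {\<omega> \<in> space (pair_space n). \<exists>t2 t3 :: nat.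
      T2 c n l0 \<omega> = enat t2 \<and> T3 c n l0 \<omega> = enat t3 \<and> real t3 \<le> real t2 + ?X}"
    using measure_T3_within_ge[OF \<open>n \<ge> 2\<close>, of c ?X l0] assms \<open>n \<ge> 2\<close> \<open>1 * 1 \<le> k\<close>
    unfolding k_def[symmetric] by simp
  finally show "measure (pair_space n) {\<omega> \<in> space (pair_space n). \<exists>t2 t3 :: nat.
      T2 c n l0 \<omega> = enat t2 \<and> T3 c n l0 \<omega> = enat t3 \<and> real t3 \<le> real t2 + 2 * k * real n * ln (real n)}
    \<ge> 1 - 6 * c / real n" .
qed

end
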